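(* Let $\nu$ be a positive Borel measure on $]0,\infty[$ satisfying $$\int_{]0,\infty[} \frac{\nu(\mathrm{d} r)}{1+r} < \infty .$$ For $\omega > 0$ define $$\mathcal{A}_1(\omega) := \omega^2 \int_{]0,\infty[} \frac{\nu(\mathrm{d} r)}{\omega^2 + r^2}, \qquad \mathcal{D}_1(\omega) := \omega \int_{]0,\infty[} \frac{r\,\nu(\mathrm{d} r)}{\omega^2 + r^2}.$$ Then, as $\omega \to \infty$: (1) $\mathcal{A}_1(\omega)/\omega \to 0$ and $\mathcal{D}_1(\omega)/\omega \to 0$; (2) if moreover $M := \int_{]0,\infty[} \nu(\mathrm{d} r) < \infty$, then $\mathcal{A}_1(\omega) \to M$.
   Context: The functions $\mathcal{A}_1(\omega) = \mathrm{Re}\, b(-\mathrm{i}\omega)$ and $\mathcal{D}_1(\omega) = -\mathrm{Im}\, b(-\mathrm{i}\omega)$ are the attenuation and dispersion functions associated with an admissible dispersion-attenuation function $b(p) = p\int_{]0,\infty[} \frac{\nu(\mathrm{d} r)}{p+r}$, where $\nu$ (the dispersion-attenuation spectral measure) is a positive measure satisfying the integrability condition above. *)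

theory Defs
  imports "HOL-Analysis.Analysis"
begin

definition admissible_spectral_measure :: "real measure \<Rightarrow> bool" where
  "admissible_spectral_measure \<nu> \<longleftrightarrow>
     sets \<nu> = sets borel \<and> emeasure \<nu> {..0} = 0 \<and>
     (\<integral>\<^sup>+ r \<in> {0<..}. ennreal (1 / (1 + r)) \<partial>\<nu>) < \<infinity>"

definition A1 :: "real measure \<Rightarrow> real \<Rightarrow> real" where
  "A1 \<nu> \<omega> = \<omega>\<^sup>2 * (\<integral> r \<in> {0<..}. 1 / (\<omega>\<^sup>2 + r\<^sup>2) \<partial>\<nu>)"

definition D1 :: "real measure \<Rightarrow> real \<Rightarrow> real" where
  "D1 \<nu> \<omega> = \<omega> * (\<integral> r \<in> {0<..}. r / (\<omega>\<^sup>2 + r\<^sup>2) \<partial>\<nu>)"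

end

theory Submission
  imports Defs "HOL-Real_Asymp.Real_Asymp"
begin

text \<open>Each of the three quotients is an integral over \<open>]0,\<infinity>[\<close> of a kernel in \<open>r\<close>
  that converges pointwise as \<open>\<omega> \<rightarrow> \<infinity>\<close> (to \<open>0\<close>, \<open>0\<close> and \<open>1\<close> respectively) and, for
  \<open>\<omega> \<ge> 1\<close>, is dominated by \<open>2/(1+r)\<close>, resp. by \<open>1\<close>; these dominating functions are
  \<open>\<nu>\<close>-integrable by admissibility, resp. by finiteness of \<open>\<nu>\<close>. Dominated convergence
  gives all three limits.\<close>

lemma set_integral_dominated_convergence_at_top:
  fixes M :: "'a measure" and g :: "real \<Rightarrow> 'a \<Rightarrow> real"
  assumes A: "A \<in> sets M" and w: "set_integrable M A w"
    and g: "\<And>t. g t \<in> borel_measurable M" and h: "h \<in> borel_measurable M"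
    and lim: "\<And>x. x \<in> A \<Longrightarrow> ((\<lambda>t. g t x) \<longlongrightarrow> h x) at_top"
    and bound: "\<forall>\<^sub>F t in at_top. \<forall>x\<in>A. \<bar>g t x\<bar> \<le> w x"
  shows "((\<lambda>t. LINT x:A|M. g t x) \<longlongrightarrow> (LINT x:A|M. h x)) at_top"
  unfolding set_lebesgue_integral_def
proof (rule integral_dominated_convergence_at_top[where w = "\<lambda>x. indicator A x *\<^sub>R w x"])
  show "integrable M (\<lambda>x. indicator A x *\<^sub>R w x)"
    using w by (simp add: set_integrable_def)
  show "(\<lambda>x. indicator A x *\<^sub>R h x) \<in> borel_measurable M"
    using A h by measurable
  show "(\<lambda>x. indicator A x *\<^sub>R g t x) \<in> borel_measurable M" for t
    using A g by measurable
  show "AE x in M. ((\<lambda>t. indicator A x *\<^sub>R g t x) \<longlongrightarrow> indicator A x *\<^sub>R h x) at_top"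
    by (intro AE_I2) (auto intro: lim split: split_indicator)
  show "\<forall>\<^sub>F t in at_top. AE x in M. norm (indicator A x *\<^sub>R g t x) \<le> indicator A x *\<^sub>R w x"
    using bound by eventually_elim (auto split: split_indicator)
qed

lemma admissible_spectral_measure_sets:
  "admissible_spectral_measure \<nu> \<Longrightarrow> sets \<nu> = sets borel"
  by (simp add: admissible_spectral_measure_def)

lemma admissible_spectral_measure_set_integrable:
  assumes "admissible_spectral_measure \<nu>"
  shows "set_integrable \<nu> {0<..} (\<lambda>r. 1 / (1 + r))"
proof -
  have "(\<integral>\<^sup>+ r. ennreal (norm (indicator {0<..} r *\<^sub>R (1 / (1 + r)))) \<partial>\<nu>)
      = (\<integral>\<^sup>+ r \<in> {0<..}. ennreal (1 / (1 + r)) \<partial>\<nu>)"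
    by (rule nn_integral_cong) (auto split: split_indicator)
  with assms show ?thesis
    unfolding set_integrable_def integrable_iff_bounded admissible_spectral_measure_def
    by (simp add: measurable_cong_sets[OF admissible_spectral_measure_sets[OF assms] refl])
qed

lemma frequency_kernel_le:
  fixes \<omega> r :: real
  assumes "1 \<le> \<omega>" "0 < r"
  shows "\<omega> / (\<omega>\<^sup>2 + r\<^sup>2) \<le> 2 / (1 + r)"
proof -
  have "\<omega> \<le> \<omega>\<^sup>2"
    using assms by (simp add: power2_eq_square)
  moreover have "2 * (\<omega> * r) \<le> \<omega>\<^sup>2 + r\<^sup>2"
    using sum_squares_bound[of \<omega> r] by (simp add: mult.assoc)
  moreover have "0 \<le> r\<^sup>2"
    by simp
  ultimately have "\<omega> * (1 + r) \<le> 2 * (\<omega>\<^sup>2 + r\<^sup>2)"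
    using assms unfolding distrib_left mult_1_right by linarith
  then show ?thesis
    using assms by (simp add: divide_simps add_pos_nonneg)
qed

lemma relaxation_kernel_le:
  fixes \<omega> r :: real
  assumes "1 \<le> \<omega>" "0 < r"
  shows "r / (\<omega>\<^sup>2 + r\<^sup>2) \<le> 2 / (1 + r)"
proof -
  have "1 \<le> \<omega>\<^sup>2"
    using assms by simp
  moreover have "2 * r \<le> 1 + r\<^sup>2"
    using sum_squares_bound[of 1 r] by simp
  ultimately have "r * (1 + r) \<le> 2 * (\<omega>\<^sup>2 + r\<^sup>2)"
    using assms unfolding distrib_left mult_1_right power2_eq_square by linarith
  then show ?thesis
    using assms by (simp add: divide_simps add_pos_nonneg)
qed

lemma admissible_kernel_integral_tendsto_zero:
  fixes k :: "real \<Rightarrow> real \<Rightarrow> real"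
  assumes \<nu>: "admissible_spectral_measure \<nu>"
    and k: "\<And>\<omega>. k \<omega> \<in> borel_measurable borel"
    and lim: "\<And>r. 0 < r \<Longrightarrow> ((\<lambda>\<omega>. k \<omega> r) \<longlongrightarrow> 0) at_top"
    and bound: "\<And>\<omega> r. 1 \<le> \<omega> \<Longrightarrow> 0 < r \<Longrightarrow> \<bar>k \<omega> r\<bar> \<le> 2 / (1 + r)"
  shows "((\<lambda>\<omega>. LINT r:{0<..}|\<nu>. k \<omega> r) \<longlongrightarrow> 0) at_top"
proof -
  note sets = admissible_spectral_measure_sets[OF \<nu>]
  have "((\<lambda>\<omega>. LINT r:{0<..}|\<nu>. k \<omega> r) \<longlongrightarrow> (LINT r:{0<..}|\<nu>. 0)) at_top"
  proof (rule set_integral_dominated_convergence_at_top)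
    show "set_integrable \<nu> {0<..} (\<lambda>r. 2 / (1 + r))"
      using set_integrable_mult_right[OF admissible_spectral_measure_set_integrable[OF \<nu>], of 2]
      by simp
    show "\<forall>\<^sub>F \<omega> in at_top. \<forall>r\<in>{0<..}. \<bar>k \<omega> r\<bar> \<le> 2 / (1 + r)"
      using eventually_ge_at_top[of 1] by eventually_elim (auto intro: bound)
  qed (use sets k lim in \<open>auto simp: measurable_cong_sets[OF sets refl]\<close>)
  then show ?thesis
    by (simp add: set_lebesgue_integral_def)
qed

lemma A1_div_tendsto_zero:
  assumes "admissible_spectral_measure \<nu>"
  shows "((\<lambda>\<omega>. A1 \<nu> \<omega> / \<omega>) \<longlongrightarrow> 0) at_top"
proof -
  have "((\<lambda>\<omega>. LINT r:{0<..}|\<nu>. \<omega> / (\<omega>\<^sup>2 + r\<^sup>2)) \<longlongrightarrow> 0) at_top"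
  proof (rule admissible_kernel_integral_tendsto_zero[OF assms])
    show "((\<lambda>\<omega>. \<omega> / (\<omega>\<^sup>2 + r\<^sup>2)) \<longlongrightarrow> 0) at_top" for r :: real
      by real_asymp
    show "\<bar>\<omega> / (\<omega>\<^sup>2 + r\<^sup>2)\<bar> \<le> 2 / (1 + r)" if "1 \<le> \<omega>" "0 < r" for \<omega> r :: real
      using frequency_kernel_le[OF that] that by simp
  qed simp
  moreover have "\<forall>\<^sub>F \<omega> in at_top. (LINT r:{0<..}|\<nu>. \<omega> / (\<omega>\<^sup>2 + r\<^sup>2)) = A1 \<nu> \<omega> / \<omega>"
  proof (rule eventually_mono[OF eventually_gt_at_top[of 0]])
    fix \<omega> :: real assume "0 < \<omega>"
    have "A1 \<nu> \<omega> / \<omega> = \<omega> * (LINT r:{0<..}|\<nu>. 1 / (\<omega>\<^sup>2 + r\<^sup>2))"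
      using \<open>0 < \<omega>\<close> by (simp add: A1_def power2_eq_square)
    also have "\<dots> = (LINT r:{0<..}|\<nu>. \<omega> / (\<omega>\<^sup>2 + r\<^sup>2))"
      by (subst set_integral_mult_right[symmetric]) simp
    finally show "(LINT r:{0<..}|\<nu>. \<omega> / (\<omega>\<^sup>2 + r\<^sup>2)) = A1 \<nu> \<omega> / \<omega>" ..
  qed
  ultimately show ?thesis
    by (rule Lim_transform_eventually)
qed

lemma D1_div_tendsto_zero:
  assumes "admissible_spectral_measure \<nu>"
  shows "((\<lambda>\<omega>. D1 \<nu> \<omega> / \<omega>) \<longlongrightarrow> 0) at_top"
proof -
  have "((\<lambda>\<omega>. LINT r:{0<..}|\<nu>. r / (\<omega>\<^sup>2 + r\<^sup>2)) \<longlongrightarrow> 0) at_top"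
  proof (rule admissible_kernel_integral_tendsto_zero[OF assms])
    show "((\<lambda>\<omega>. r / (\<omega>\<^sup>2 + r\<^sup>2)) \<longlongrightarrow> 0) at_top" for r :: real
      by real_asymp
    show "\<bar>r / (\<omega>\<^sup>2 + r\<^sup>2)\<bar> \<le> 2 / (1 + r)" if "1 \<le> \<omega>" "0 < r" for \<omega> r :: real
      using relaxation_kernel_le[OF that] that by simp
  qed simp
  moreover have "\<forall>\<^sub>F \<omega> in at_top. (LINT r:{0<..}|\<nu>. r / (\<omega>\<^sup>2 + r\<^sup>2)) = D1 \<nu> \<omega> / \<omega>"
    using eventually_gt_at_top[of "0::real"] by eventually_elim (simp add: D1_def)
  ultimately show ?thesis
    by (rule Lim_transform_eventually)
qed

lemma A1_tendsto_total_mass: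
  assumes \<nu>: "admissible_spectral_measure \<nu>" and fin: "emeasure \<nu> {0<..} < \<infinity>"
  shows "((\<lambda>\<omega>. A1 \<nu> \<omega>) \<longlongrightarrow> measure \<nu> {0<..}) at_top"
proof -
  note sets = admissible_spectral_measure_sets[OF \<nu>]
  have S: "{0<..} \<in> sets \<nu>"
    using sets by simp
  have "((\<lambda>\<omega>. LINT r:{0<..}|\<nu>. \<omega>\<^sup>2 / (\<omega>\<^sup>2 + r\<^sup>2)) \<longlongrightarrow> (LINT r:{0<..}|\<nu>. 1 :: real)) at_top"
  proof (rule set_integral_dominated_convergence_at_top[OF S])
    show "set_integrable \<nu> {0<..} (\<lambda>_. 1)"
      using S fin by (simp add: set_integrable_def)
    show "((\<lambda>\<omega>. \<omega>\<^sup>2 / (\<omega>\<^sup>2 + r\<^sup>2)) \<longlongrightarrow> 1) at_top" for r :: real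
      by real_asymp
    show "\<forall>\<^sub>F \<omega>::real in at_top. \<forall>r::real\<in>{0<..}. \<bar>\<omega>\<^sup>2 / (\<omega>\<^sup>2 + r\<^sup>2)\<bar> \<le> 1"
    proof (intro always_eventually allI ballI)
      fix \<omega> r :: real assume "r \<in> {0<..}"
      then have "0 < \<omega>\<^sup>2 + r\<^sup>2"
        by (simp add: add_nonneg_pos)
      then show "\<bar>\<omega>\<^sup>2 / (\<omega>\<^sup>2 + r\<^sup>2)\<bar> \<le> 1"
        by (simp add: divide_le_eq_1)
    qed
  qed (auto simp: measurable_cong_sets[OF sets refl])
  moreover have "A1 \<nu> \<omega> = (LINT r:{0<..}|\<nu>. \<omega>\<^sup>2 / (\<omega>\<^sup>2 + r\<^sup>2))" for \<omega>
    using set_integral_mult_right[where a = "\<omega>\<^sup>2" and A = "{0<..}" and M = \<nu>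
        and f = "\<lambda>r. 1 / (\<omega>\<^sup>2 + r\<^sup>2)"]
    by (simp add: A1_def)
  moreover have "(LINT r:{0<..}|\<nu>. 1 :: real) = measure \<nu> {0<..}"
    using set_integral_const[OF S, of "1 :: real"] fin by simp
  ultimately show ?thesis
    by simp
qed

theorem theorem2:
  fixes \<nu> :: "real measure"
  assumes "admissible_spectral_measure \<nu>"
  shows "((\<lambda>\<omega>. A1 \<nu> \<omega> / \<omega>) \<longlongrightarrow> 0) at_top
         \<and> ((\<lambda>\<omega>. D1 \<nu> \<omega> / \<omega>) \<longlongrightarrow> 0) at_top
         \<and> (emeasure \<nu> {0<..} < \<infinity> \<longrightarrow>
               ((\<lambda>\<omega>. A1 \<nu> \<omega>) \<longlongrightarrow> measure \<nu> {0<..}) at_top)"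
  using A1_div_tendsto_zero[OF assms] D1_div_tendsto_zero[OF assms] A1_tendsto_total_mass[OF assms]
  by blast

end
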